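(* For every temporal oriented tree $\mathcal T$, the minimum cardinality of a temporal path cover of $\mathcal T$ equals the minimum cardinality of a clique cover of the connectivity graph $G$ of $\mathcal T$.
   Context: A temporal digraph is a pair $(D,\lambda)$ with $D=(V,A)$ a finite digraph and $\lambda:A\to 2^{\{1,\dots,t_{\max}\}}$ giving the time-steps at which each arc is active. A temporal oriented tree $\mathcal T=(T,\lambda)$ is one whose underlying digraph $T$ is an orientation of a tree. A temporal path is a sequence $(v_1,v_2,t_1),\dots,(v_{k-1},v_k,t_{k-1})$ with pairwise distinct $v_i$, $\overrightarrow{v_iv_{i+1}}\in A$, $t_i\in\lambda(\overrightarrow{v_iv_{i+1}})$ and $t_1<\dots<t_{k-1}$; a single vertex is also a temporal path. A temporal path cover is a collection of temporal paths whose vertex sets together contain $V$. Two vertices $u\ne v$ are temporally connected if there is a temporal path from $u$ to $v$ or from $v$ to $u$. The connectivity graph of $\mathcal T$ is the undirected graph $G$ with $V(G)=V(T)$ and $uv\in E(G)$ iff $u\neq v$ and $u,v$ are temporally connected. A clique cover of $G$ is a set of complete subgraphs of $G$ whose vertex sets cover $V(G)$. *)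

theory Defs
  imports Main
begin

definition temporal_digraph ::
  "'v set \<Rightarrow> ('v \<times> 'v) set \<Rightarrow> ('v \<times> 'v \<Rightarrow> nat set) \<Rightarrow> nat \<Rightarrow> bool" where
  "temporal_digraph V A lam tmax \<longleftrightarrow>
     finite V \<and> A \<subseteq> V \<times> V \<and> (\<forall>a\<in>A. lam a \<subseteq> {1..tmax})"

definition und_adj :: "('v \<times> 'v) set \<Rightarrow> 'v \<Rightarrow> 'v \<Rightarrow> bool" where
  "und_adj A u v \<longleftrightarrow> (u, v) \<in> A \<or> (v, u) \<in> A"

definition und_connected :: "'v set \<Rightarrow> ('v \<times> 'v) set \<Rightarrow> bool" where
  "und_connected V A \<longleftrightarrow> (\<forall>u\<in>V. \<forall>v\<in>V. (u, v) \<in> (A \<union> A\<inverse>)\<^sup>*)"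

definition und_cycle :: "('v \<times> 'v) set \<Rightarrow> 'v list \<Rightarrow> bool" where
  "und_cycle A cs \<longleftrightarrow> length cs \<ge> 3 \<and> distinct cs \<and>
     (\<forall>i < length cs - 1. und_adj A (cs ! i) (cs ! (i + 1))) \<and>
     und_adj A (last cs) (hd cs)"

definition oriented_tree :: "'v set \<Rightarrow> ('v \<times> 'v) set \<Rightarrow> bool" where
  "oriented_tree V A \<longleftrightarrow> finite V \<and> V \<noteq> {} \<and> A \<subseteq> V \<times> V \<and>
     (\<forall>v. (v, v) \<notin> A) \<and> (\<forall>u v. (u, v) \<in> A \<longrightarrow> (v, u) \<notin> A) \<and>
     und_connected V A \<and> (\<nexists>cs. set cs \<subseteq> V \<and> und_cycle A cs)"

definition temporal_path ::
  "'v set \<Rightarrow> ('v \<times> 'v) set \<Rightarrow> ('v \<times> 'v \<Rightarrow> nat set) \<Rightarrow> 'v list \<times> nat list \<Rightarrow> bool" where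
  "temporal_path V A lam p \<longleftrightarrow> (case p of (vs, ts) \<Rightarrow>
     vs \<noteq> [] \<and> set vs \<subseteq> V \<and> distinct vs \<and> length ts = length vs - 1 \<and>
     (\<forall>i < length ts. (vs ! i, vs ! (i + 1)) \<in> A \<and> ts ! i \<in> lam (vs ! i, vs ! (i + 1))) \<and>
     sorted_wrt (<) ts)"

definition temporal_path_cover ::
  "'v set \<Rightarrow> ('v \<times> 'v) set \<Rightarrow> ('v \<times> 'v \<Rightarrow> nat set) \<Rightarrow> ('v list \<times> nat list) set \<Rightarrow> bool" where
  "temporal_path_cover V A lam P \<longleftrightarrow>
     finite P \<and> (\<forall>p\<in>P. temporal_path V A lam p) \<and> V \<subseteq> (\<Union>p\<in>P. set (fst p))"

definition min_temporal_path_cover ::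
  "'v set \<Rightarrow> ('v \<times> 'v) set \<Rightarrow> ('v \<times> 'v \<Rightarrow> nat set) \<Rightarrow> nat" where
  "min_temporal_path_cover V A lam =
     (LEAST k. \<exists>P. temporal_path_cover V A lam P \<and> card P = k)"

definition temporal_path_from_to ::
  "'v set \<Rightarrow> ('v \<times> 'v) set \<Rightarrow> ('v \<times> 'v \<Rightarrow> nat set) \<Rightarrow> 'v \<Rightarrow> 'v \<Rightarrow> bool" where
  "temporal_path_from_to V A lam u v \<longleftrightarrow>
     (\<exists>vs ts. temporal_path V A lam (vs, ts) \<and> hd vs = u \<and> last vs = v)"

definition temporally_connected ::
  "'v set \<Rightarrow> ('v \<times> 'v) set \<Rightarrow> ('v \<times> 'v \<Rightarrow> nat set) \<Rightarrow> 'v \<Rightarrow> 'v \<Rightarrow> bool" where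
  "temporally_connected V A lam u v \<longleftrightarrow> u \<noteq> v \<and>
     (temporal_path_from_to V A lam u v \<or> temporal_path_from_to V A lam v u)"

definition connectivity_graph_edges ::
  "'v set \<Rightarrow> ('v \<times> 'v) set \<Rightarrow> ('v \<times> 'v \<Rightarrow> nat set) \<Rightarrow> 'v set set" where
  "connectivity_graph_edges V A lam =
     {{u, v} | u v. u \<in> V \<and> v \<in> V \<and> temporally_connected V A lam u v}"

text \<open>Clique covers of an undirected graph (VG, EG); a complete subgraph is identified
  with its vertex set.\<close>
definition is_clique :: "'v set \<Rightarrow> 'v set set \<Rightarrow> 'v set \<Rightarrow> bool" where
  "is_clique VG EG C \<longleftrightarrow> C \<subseteq> VG \<and> (\<forall>u\<in>C. \<forall>v\<in>C. u \<noteq> v \<longrightarrow> {u, v} \<in> EG)"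

definition clique_cover :: "'v set \<Rightarrow> 'v set set \<Rightarrow> 'v set set \<Rightarrow> bool" where
  "clique_cover VG EG \<C> \<longleftrightarrow> finite \<C> \<and> (\<forall>C\<in>\<C>. is_clique VG EG C) \<and> VG \<subseteq> \<Union>\<C>"

definition min_clique_cover :: "'v set \<Rightarrow> 'v set set \<Rightarrow> nat" where
  "min_clique_cover VG EG = (LEAST k. \<exists>\<C>. clique_cover VG EG \<C> \<and> card \<C> = k)"

end

theory Submission
  imports Defs
begin

text \<open>
  Every temporal path spans a clique of the connectivity graph, so path covers give clique covers
  of the same size. Conversely, in an oriented tree every clique C lies on a single temporal path:
  take a longest temporal path with both ends in C. Paths in a tree are unique and a directed path
  from u to v rules out one from v to u, so a vertex z \<in> C off this path either reaches (or is
  reached from) an end, and then the directed path through z to the other end must carry the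
  temporal connection, giving a longer temporal path; or z lies between the two ends, and hence
  on the path itself.
\<close>

lemma successively_append_Cons_iff:
  "successively P (xs @ y # ys) \<longleftrightarrow> successively P (xs @ [y]) \<and> successively P (y # ys)"
  using successively_append_iff[of P "xs @ [y]" ys] successively_append_iff[of P "[y]" ys]
  by auto

lemma append_tl_joint:
  assumes "p \<noteq> []" "q \<noteq> []" "last p = hd q"
  shows "hd (p @ tl q) = hd p" and "last (p @ tl q) = last q"
    and "length (p @ tl q) = length p + length q - 1"
  using assms by (cases q; simp)+

lemma two_le_length_if_hd_neq_last: "hd xs \<noteq> last xs \<Longrightarrow> 2 \<le> length xs"
  by (cases xs; cases "tl xs") (auto simp: hd_Nil_eq_last)

lemma Least_eq_if_mutually_bounded:
  fixes P Q :: "nat \<Rightarrow> bool"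
  assumes "P k0"
    and P_Q: "\<And>k. P k \<Longrightarrow> \<exists>l\<le>k. Q l"
    and Q_P: "\<And>l. Q l \<Longrightarrow> \<exists>k\<le>l. P k"
  shows "(LEAST k. P k) = (LEAST l. Q l)"
proof -
  have P_least: "P (LEAST k. P k)" using assms(1) by (rule LeastI)
  then obtain l where "l \<le> (LEAST k. P k)" "Q l" using P_Q by blast
  then have Q_least: "Q (LEAST l. Q l)" and "(LEAST l. Q l) \<le> (LEAST k. P k)"
    by (auto intro: LeastI Least_le order_trans)
  moreover obtain k where "k \<le> (LEAST l. Q l)" "P k" using Q_least Q_P by blast
  then have "(LEAST k. P k) \<le> (LEAST l. Q l)" by (auto intro: Least_le order_trans)
  ultimately show ?thesis by simp
qed

definition dir_path :: "'v set \<Rightarrow> ('v \<times> 'v) set \<Rightarrow> 'v list \<Rightarrow> bool" where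
  "dir_path V A xs \<longleftrightarrow>
     xs \<noteq> [] \<and> distinct xs \<and> set xs \<subseteq> V \<and> successively (\<lambda>x y. (x, y) \<in> A) xs"

definition und_path :: "'v set \<Rightarrow> ('v \<times> 'v) set \<Rightarrow> 'v list \<Rightarrow> bool" where
  "und_path V A xs \<longleftrightarrow>
     xs \<noteq> [] \<and> distinct xs \<and> set xs \<subseteq> V \<and> successively (und_adj A) xs"

lemma und_adj_sym: "und_adj A u v \<longleftrightarrow> und_adj A v u"
  by (auto simp: und_adj_def)

lemma dir_path_imp_und_path: "dir_path V A xs \<Longrightarrow> und_path V A xs"
  unfolding dir_path_def und_path_def by (auto elim: successively_mono simp: und_adj_def)

lemma und_path_rev: "und_path V A xs \<Longrightarrow> und_path V A (rev xs)"
  unfolding und_path_def by (auto elim: successively_mono simp: und_adj_sym)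

lemma dir_path_appendD:
  assumes "dir_path V A (xs @ ys)"
  shows "xs \<noteq> [] \<Longrightarrow> dir_path V A xs" and "ys \<noteq> [] \<Longrightarrow> dir_path V A ys"
  using assms by (auto simp: dir_path_def successively_append_iff)

lemma und_cycle_iff_successively:
  "und_cycle A cs \<longleftrightarrow>
     length cs \<ge> 3 \<and> distinct cs \<and> successively (und_adj A) (cs @ [hd cs])"
proof (cases "cs = []")
  case False
  then have "successively (und_adj A) (cs @ [hd cs]) \<longleftrightarrow>
      successively (und_adj A) cs \<and> und_adj A (last cs) (hd cs)"
    by (simp add: successively_append_iff)
  then show ?thesis by (simp add: und_cycle_def successively_conv_nth less_diff_conv)
qed (simp add: und_cycle_def)

lemma und_path_diverging_imp_und_cycle:
  assumes xs: "und_path V A (x # a # xs)" and ys: "und_path V A (x # b # ys)"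
    and "a \<noteq> b" and same_last: "last (a # xs) = last (b # ys)"
  shows "\<exists>cs. set cs \<subseteq> V \<and> und_cycle A cs"
proof -
  txt \<open>The first vertex d of the first path that lies on the second closes a cycle
    x, p1, d, rev p2 back to x.\<close>
  have "\<exists>d\<in>set (a # xs). d \<in> set (b # ys)" using same_last by (metis last_in_set list.discI)
  then obtain p1 d q1 where split1: "a # xs = p1 @ d # q1" and "d \<in> set (b # ys)"
    and p1_avoids: "\<forall>e\<in>set p1. e \<notin> set (b # ys)"
    using split_list_first_prop[of "a # xs" "\<lambda>e. e \<in> set (b # ys)"] by blast
  then obtain p2 q2 where split2: "b # ys = p2 @ d # q2" using split_list by metis
  let ?cs = "x # p1 @ d # rev p2"
  have "p1 \<noteq> [] \<or> p2 \<noteq> []"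
    using split1 split2 \<open>a \<noteq> b\<close> by (cases p1; cases p2) auto
  then have "length ?cs \<ge> 3" by (auto simp: Suc_le_eq)
  moreover have "distinct ?cs"
  proof -
    have "distinct (x # p1 @ d # q1)" "distinct (x # p2 @ d # q2)"
      using xs ys split1 split2 by (simp_all add: und_path_def)
    then show ?thesis using p1_avoids split2 by auto
  qed
  moreover have "successively (und_adj A) (?cs @ [hd ?cs])"
  proof -
    have "successively (und_adj A) ((x # p1) @ d # q1)"
      using xs split1 by (simp add: und_path_def)
    then have "successively (und_adj A) (x # p1 @ [d])"
      by (metis append_Cons successively_append_Cons_iff)
    moreover have "successively (und_adj A) ((x # p2) @ d # q2)"
      using ys split2 by (simp add: und_path_def)
    then have "successively (und_adj A) (x # p2 @ [d])"
      by (metis append_Cons successively_append_Cons_iff)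
    then have "successively (\<lambda>u v. und_adj A v u) (x # p2 @ [d])"
      by (auto elim: successively_mono simp: und_adj_sym)
    then have "successively (und_adj A) (rev (x # p2 @ [d]))"
      by (simp only: successively_rev)
    then have "successively (und_adj A) (d # rev p2 @ [x])" by simp
    ultimately show ?thesis
      using successively_append_Cons_iff[of "und_adj A" "x # p1" d "rev p2 @ [x]"] by simp
  qed
  moreover have "set ?cs \<subseteq> V"
    using xs ys split1 split2 unfolding und_path_def by auto
  ultimately have "set ?cs \<subseteq> V \<and> und_cycle A ?cs"
    unfolding und_cycle_iff_successively by blast
  then show ?thesis by blast
qed

lemma und_path_Cons_Cons_tl: "und_path V A (x # y # r) \<Longrightarrow> und_path V A (y # r)"
  by (simp add: und_path_def)

lemma und_path_Cons_Cons_last: "und_path V A (x # y # r) \<Longrightarrow> last (y # r) \<noteq> x"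
  unfolding und_path_def by (metis distinct.simps(2) last_in_set list.discI)

lemma und_path_unique:
  assumes acyclic: "\<nexists>cs. set cs \<subseteq> V \<and> und_cycle A cs"
  shows "und_path V A xs \<Longrightarrow> und_path V A ys \<Longrightarrow> hd xs = hd ys \<Longrightarrow> last xs = last ys \<Longrightarrow> xs = ys"
proof (induction xs arbitrary: ys)
  case Nil
  then show ?case by (simp add: und_path_def)
next
  case (Cons x xs)
  obtain ys' where ys: "ys = x # ys'"
    using Cons.prems(2,3) by (cases ys) (auto simp: und_path_def)
  show ?case
  proof (cases xs)
    case Nil
    then show ?thesis
      using Cons.prems ys und_path_Cons_Cons_last by (cases ys') fastforce+
  next
    case xs: (Cons a r)
    then obtain b r' where ys': "ys' = b # r'"
      using Cons.prems ys und_path_Cons_Cons_last by (cases ys') fastforce+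
    have "a = b"
      using und_path_diverging_imp_und_cycle[of V A x a r b r'] Cons.prems acyclic xs ys ys' by auto
    moreover have "und_path V A xs" "und_path V A ys'"
      using Cons.prems(1,2) xs ys ys' by (auto intro: und_path_Cons_Cons_tl)
    moreover have "last xs = last ys'" using Cons.prems(4) xs ys ys' by simp
    ultimately have "xs = ys'" using xs ys' by (intro Cons.IH) simp_all
    then show ?thesis using ys by simp
  qed
qed

lemma oriented_tree_acyclic: "oriented_tree V A \<Longrightarrow> \<nexists>cs. set cs \<subseteq> V \<and> und_cycle A cs"
  unfolding oriented_tree_def by blast

lemma dir_path_unique:
  "oriented_tree V A \<Longrightarrow> dir_path V A xs \<Longrightarrow> dir_path V A ys \<Longrightarrow>
    hd xs = hd ys \<Longrightarrow> last xs = last ys \<Longrightarrow> xs = ys"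
  using und_path_unique[OF oriented_tree_acyclic] dir_path_imp_und_path by blast

lemma dir_path_antisym:
  assumes ot: "oriented_tree V A" and xs: "dir_path V A xs" and ys: "dir_path V A ys"
    and "hd xs = last ys" and "last xs = hd ys"
  shows "hd xs = last xs"
proof (rule ccontr)
  assume "hd xs \<noteq> last xs"
  then obtain u w r where xs_eq: "xs = u # w # r"
    using xs by (cases xs; cases "tl xs") (auto simp: dir_path_def)
  have "rev ys = xs"
    using und_path_unique[OF oriented_tree_acyclic[OF ot]] dir_path_imp_und_path[OF xs]
      und_path_rev[OF dir_path_imp_und_path[OF ys]] assms(4,5) xs
    by (simp add: hd_rev last_rev dir_path_def)
  then have "successively (\<lambda>x y. (y, x) \<in> A) xs"
    using ys by (auto simp: dir_path_def)
  then have "(w, u) \<in> A" using xs_eq by simp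
  moreover have "(u, w) \<in> A" using xs xs_eq by (simp add: dir_path_def)
  ultimately show False using ot unfolding oriented_tree_def by blast
qed

lemma dir_path_join:
  assumes ot: "oriented_tree V A" and p: "dir_path V A p" and yq: "dir_path V A yq"
    and joint: "last p = hd yq"
  shows "dir_path V A (p @ tl yq)"
proof -
  obtain y q where yq_eq: "yq = y # q" using yq by (cases yq) (auto simp: dir_path_def)
  then have q: "dir_path V A (y # q)" and joint: "last p = y" using yq joint by simp_all
  have "set p \<inter> set q = {}"
  proof (rule ccontr)
    assume "set p \<inter> set q \<noteq> {}"
    then obtain m p1 p2 r1 r2 where p_eq: "p = p1 @ m # p2" and q_eq: "q = r1 @ m # r2"
      by (metis disjoint_iff split_list)
    have "dir_path V A (m # p2)" using dir_path_appendD(2)[of V A p1] p p_eq by simp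
    moreover have "dir_path V A (y # r1 @ [m])"
      using dir_path_appendD(1)[of V A "y # r1 @ [m]" r2] q q_eq by simp
    moreover have "m \<noteq> y" using q q_eq by (auto simp: dir_path_def)
    ultimately show False
      using dir_path_antisym[OF ot, of "m # p2" "y # r1 @ [m]"] joint p_eq by simp
  qed
  then show ?thesis
    using p q joint yq_eq by (cases q) (auto simp: dir_path_def successively_append_iff)
qed

lemma temporal_path_imp_dir_path: "temporal_path V A lam (vs, ts) \<Longrightarrow> dir_path V A vs"
  unfolding temporal_path_def dir_path_def successively_conv_nth by auto

lemma temporal_path_from_to_imp_dir_path:
  "temporal_path_from_to V A lam u v \<Longrightarrow> \<exists>w. dir_path V A w \<and> hd w = u \<and> last w = v"
  unfolding temporal_path_from_to_def using temporal_path_imp_dir_path by blast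

lemma temporal_path_length_le_card:
  "finite V \<Longrightarrow> temporal_path V A lam (vs, ts) \<Longrightarrow> length vs \<le> card V"
  unfolding temporal_path_def by (auto simp flip: distinct_card intro: card_mono)

lemma temporal_path_drop:
  assumes "temporal_path V A lam (vs, ts)" and "i < length vs"
  shows "temporal_path V A lam (drop i vs, drop i ts)"
  using assms unfolding temporal_path_def
  by (auto simp: sorted_wrt_drop add.commute[of i] dest: in_set_dropD)

lemma temporal_path_take:
  assumes "temporal_path V A lam (vs, ts)" and "0 < k" and "k \<le> length vs"
  shows "temporal_path V A lam (take k vs, take (k - 1) ts)"
  using assms unfolding temporal_path_def
  by (auto simp: sorted_wrt_take dest: in_set_takeD)

lemma temporal_path_from_to_nth:
  assumes tp: "temporal_path V A lam (vs, ts)" and "i < j" and "j < length vs"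
  shows "temporal_path_from_to V A lam (vs ! i) (vs ! j)"
proof -
  let ?ws = "take (j - i + 1) (drop i vs)"
  have "temporal_path V A lam (?ws, take (j - i) (drop i ts))"
    using temporal_path_take[OF temporal_path_drop[OF tp], of i "j - i + 1"] assms by simp
  moreover have "hd ?ws = vs ! i" and "last ?ws = vs ! j"
    using assms by (simp_all add: hd_drop_conv_nth last_conv_nth)
  ultimately show ?thesis unfolding temporal_path_from_to_def by blast
qed

lemma connectivity_graph_edge_iff:
  "{u, v} \<in> connectivity_graph_edges V A lam \<longleftrightarrow>
     u \<in> V \<and> v \<in> V \<and> temporally_connected V A lam u v"
  unfolding connectivity_graph_edges_def temporally_connected_def
  by (auto simp: doubleton_eq_iff)

lemma temporal_path_is_clique:
  assumes tp: "temporal_path V A lam (vs, ts)"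
  shows "is_clique V (connectivity_graph_edges V A lam) (set vs)"
  unfolding is_clique_def
proof (intro conjI ballI impI)
  show vs_V: "set vs \<subseteq> V" using tp by (simp add: temporal_path_def)
  fix u v assume "u \<in> set vs" "v \<in> set vs" "u \<noteq> v"
  then obtain i j where "i < length vs" "j < length vs" "i \<noteq> j" "u = vs ! i" "v = vs ! j"
    by (metis in_set_conv_nth)
  then have "temporally_connected V A lam u v"
    using temporal_path_from_to_nth[OF tp] \<open>u \<noteq> v\<close>
    unfolding temporally_connected_def by (metis linorder_neqE_nat)
  then show "{u, v} \<in> connectivity_graph_edges V A lam"
    using vs_V \<open>u \<in> set vs\<close> \<open>v \<in> set vs\<close> by (auto simp: connectivity_graph_edge_iff)
qed

lemma temporal_path_along_dir_path:
  assumes ot: "oriented_tree V A" and w: "dir_path V A w"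
    and conn: "temporally_connected V A lam (hd w) (last w)"
  shows "\<exists>ts. temporal_path V A lam (w, ts)"
proof -
  have "\<not> temporal_path_from_to V A lam (last w) (hd w)"
    using dir_path_antisym[OF ot w] conn temporal_path_from_to_imp_dir_path
    unfolding temporally_connected_def by metis
  then obtain vs ts where "temporal_path V A lam (vs, ts)" "hd vs = hd w" "last vs = last w"
    using conn unfolding temporally_connected_def temporal_path_from_to_def by blast
  moreover from this have "vs = w"
    using dir_path_unique[OF ot temporal_path_imp_dir_path w] by blast
  ultimately show ?thesis by blast
qed

lemma dir_path_mem_if_between:
  assumes ot: "oriented_tree V A" and vs: "dir_path V A vs"
    and q: "dir_path V A q" "hd q = hd vs" "last q = z"
    and r: "dir_path V A r" "hd r = z" "last r = last vs"
  shows "z \<in> set vs"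
proof -
  have "q \<noteq> []" "r \<noteq> []" using q r by (simp_all add: dir_path_def)
  then have "q @ tl r = vs"
    using dir_path_unique[OF ot dir_path_join[OF ot q(1) r(1)] vs] append_tl_joint[of q r] q r
    by simp
  moreover have "z \<in> set q" using q \<open>q \<noteq> []\<close> by auto
  ultimately show ?thesis by auto
qed

lemma clique_subset_longest_temporal_path:
  assumes ot: "oriented_tree V A" and clique: "is_clique V (connectivity_graph_edges V A lam) C"
    and tp: "temporal_path V A lam (vs, ts)" and ends: "hd vs \<in> C" "last vs \<in> C"
    and longest: "\<And>ws us. temporal_path V A lam (ws, us) \<Longrightarrow> hd ws \<in> C \<Longrightarrow> last ws \<in> C \<Longrightarrow>
        length ws \<le> length vs"
  shows "C \<subseteq> set vs"
proof
  fix z assume z: "z \<in> C"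
  show "z \<in> set vs"
  proof (rule ccontr)
    assume z_off: "z \<notin> set vs"
    have vs: "dir_path V A vs" using temporal_path_imp_dir_path[OF tp] .
    then have "vs \<noteq> []" by (simp add: dir_path_def)
    then have z_hd: "z \<noteq> hd vs" and z_last: "z \<noteq> last vs" using z_off by auto
    have conn: "temporally_connected V A lam u v" if "u \<in> C" "v \<in> C" "u \<noteq> v" for u v
      using clique that unfolding is_clique_def connectivity_graph_edge_iff by blast
    have no_detour: "length w \<le> length vs"
      if "dir_path V A w" "hd w \<in> C" "last w \<in> C" "hd w \<noteq> last w" for w
      using temporal_path_along_dir_path[OF ot that(1) conn[OF that(2-4)]] longest that(2,3)
      by blast
    consider "temporal_path_from_to V A lam z (hd vs)"
      | "temporal_path_from_to V A lam (last vs) z"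
      | "temporal_path_from_to V A lam (hd vs) z" "temporal_path_from_to V A lam z (last vs)"
      using conn[OF z ends(1) z_hd] conn[OF z ends(2) z_last]
      unfolding temporally_connected_def by blast
    then show False
    proof cases
      case 1
      obtain q where q: "dir_path V A q" "hd q = z" "last q = hd vs"
        using temporal_path_from_to_imp_dir_path[OF 1] by blast
      then have "q \<noteq> []" by (simp add: dir_path_def)
      then show False
        using no_detour[OF dir_path_join[OF ot q(1) vs q(3)]]
          append_tl_joint[OF _ \<open>vs \<noteq> []\<close> q(3)]
          two_le_length_if_hd_neq_last[of q] q z z_last ends z_hd by simp
    next
      case 2
      obtain q where q: "dir_path V A q" "hd q = last vs" "last q = z"
        using temporal_path_from_to_imp_dir_path[OF 2] by blast
      then have "q \<noteq> []" by (simp add: dir_path_def)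
      then show False
        using no_detour[OF dir_path_join[OF ot vs q(1) q(2)[symmetric]]]
          append_tl_joint[OF \<open>vs \<noteq> []\<close> _ q(2)[symmetric]]
          two_le_length_if_hd_neq_last[of q] q z z_hd ends z_last by simp
    next
      case 3
      then show False
        using dir_path_mem_if_between[OF ot vs] temporal_path_from_to_imp_dir_path z_off
        by metis
    qed
  qed
qed

lemma clique_subset_temporal_path:
  assumes ot: "oriented_tree V A" and clique: "is_clique V (connectivity_graph_edges V A lam) C"
  shows "\<exists>vs ts. temporal_path V A lam (vs, ts) \<and> C \<subseteq> set vs"
proof (cases "C = {}")
  case True
  obtain v where "v \<in> V" using ot unfolding oriented_tree_def by blast
  then have "temporal_path V A lam ([v], [])" by (simp add: temporal_path_def)
  then show ?thesis using True by blast
next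
  case False
  then obtain c where "c \<in> C" by blast
  let ?joins_C = "\<lambda>vs. \<exists>ts. temporal_path V A lam (vs, ts) \<and> hd vs \<in> C \<and> last vs \<in> C"
  have "?joins_C [c]"
    using \<open>c \<in> C\<close> clique by (auto simp: temporal_path_def is_clique_def)
  moreover have "\<forall>vs. ?joins_C vs \<longrightarrow> length vs < Suc (card V)"
    using temporal_path_length_le_card[of V A lam] ot
    unfolding oriented_tree_def by (auto simp: less_Suc_eq_le)
  ultimately obtain vs where "?joins_C vs" and longest: "\<forall>ws. ?joins_C ws \<longrightarrow> length ws \<le> length vs"
    using ex_has_greatest_nat[of ?joins_C "[c]" length] by blast
  then show ?thesis
    using clique_subset_longest_temporal_path[OF ot clique] by blast
qed

lemma clique_cover_of_temporal_path_cover: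
  assumes "temporal_path_cover V A lam P"
  shows "clique_cover V (connectivity_graph_edges V A lam) ((\<lambda>p. set (fst p)) ` P)"
  unfolding clique_cover_def
proof (intro conjI ballI)
  show "finite ((\<lambda>p. set (fst p)) ` P)" and "V \<subseteq> \<Union> ((\<lambda>p. set (fst p)) ` P)"
    using assms by (simp_all add: temporal_path_cover_def)
  show "is_clique V (connectivity_graph_edges V A lam) C" if "C \<in> (\<lambda>p. set (fst p)) ` P" for C
  proof -
    from that obtain vs ts where "(vs, ts) \<in> P" "C = set vs" by auto
    then show ?thesis
      using assms temporal_path_is_clique unfolding temporal_path_cover_def by blast
  qed
qed

lemma temporal_path_cover_of_clique_cover:
  assumes ot: "oriented_tree V A" and cc: "clique_cover V (connectivity_graph_edges V A lam) CC"
  shows "\<exists>P. temporal_path_cover V A lam P \<and> card P \<le> card CC"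
proof -
  have "\<exists>p. temporal_path V A lam p \<and> C \<subseteq> set (fst p)" if "C \<in> CC" for C
  proof -
    have "is_clique V (connectivity_graph_edges V A lam) C"
      using cc that by (simp add: clique_cover_def)
    then obtain vs ts where "temporal_path V A lam (vs, ts)" "C \<subseteq> set vs"
      using clique_subset_temporal_path[OF ot] by blast
    then show ?thesis by (intro exI[of _ "(vs, ts)"]) simp
  qed
  then have "\<forall>C\<in>CC. \<exists>p. temporal_path V A lam p \<and> C \<subseteq> set (fst p)" by blast
  from bchoice[OF this] obtain f
    where f: "\<forall>C\<in>CC. temporal_path V A lam (f C) \<and> C \<subseteq> set (fst (f C))" by blast
  have "temporal_path_cover V A lam (f ` CC)"
    unfolding temporal_path_cover_def
  proof (intro conjI)
    show "finite (f ` CC)" using cc by (simp add: clique_cover_def)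
    show "\<forall>p\<in>f ` CC. temporal_path V A lam p" using f by blast
    show "V \<subseteq> (\<Union>p\<in>f ` CC. set (fst p))"
    proof
      fix v assume "v \<in> V"
      then obtain C where "C \<in> CC" "v \<in> C" using cc unfolding clique_cover_def by blast
      then show "v \<in> (\<Union>p\<in>f ` CC. set (fst p))" using f by blast
    qed
  qed
  moreover have "card (f ` CC) \<le> card CC"
    using cc card_image_le by (auto simp: clique_cover_def)
  ultimately show ?thesis by blast
qed

theorem mainTheorem5:
  fixes V :: "'v set" and A :: "('v \<times> 'v) set" and lam :: "'v \<times> 'v \<Rightarrow> nat set"
    and tmax :: nat
  assumes "temporal_digraph V A lam tmax"
    and "oriented_tree V A"
  shows "min_temporal_path_cover V A lam
         = min_clique_cover V (connectivity_graph_edges V A lam)"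
  unfolding min_temporal_path_cover_def min_clique_cover_def
proof (rule Least_eq_if_mutually_bounded)
  let ?singletons = "(\<lambda>v. ([v], [] :: nat list)) ` V"
  have "temporal_path_cover V A lam ?singletons"
    using \<open>oriented_tree V A\<close>
    by (auto simp: temporal_path_cover_def temporal_path_def oriented_tree_def)
  then show "\<exists>P. temporal_path_cover V A lam P \<and> card P = card ?singletons" by blast
  show "\<exists>l\<le>k. \<exists>CC. clique_cover V (connectivity_graph_edges V A lam) CC \<and> card CC = l"
    if "\<exists>P. temporal_path_cover V A lam P \<and> card P = k" for k
  proof -
    from that obtain P where P: "temporal_path_cover V A lam P" "card P = k" by blast
    then have "card ((\<lambda>p. set (fst p)) ` P) \<le> k"
      using card_image_le by (auto simp: temporal_path_cover_def)
    with clique_cover_of_temporal_path_cover[OF P(1)] show ?thesis by blast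
  qed
  show "\<exists>k\<le>l. \<exists>P. temporal_path_cover V A lam P \<and> card P = k"
    if "\<exists>CC. clique_cover V (connectivity_graph_edges V A lam) CC \<and> card CC = l" for l
  proof -
    from that obtain CC where "clique_cover V (connectivity_graph_edges V A lam) CC" "card CC = l"
      by blast
    with temporal_path_cover_of_clique_cover[OF \<open>oriented_tree V A\<close>]
    obtain P where "temporal_path_cover V A lam P" "card P \<le> l" by blast
    then show ?thesis by blast
  qed
qed

end
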